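(* Let $A(y)=A_1(y)+A_2(y)+A_3(y)+A_4(y)$, $y\in\mathbb R$, where $$A_1(y)=-\frac1{2\sqrt{2\pi}}\int_0^\infty e^{-2(t-y)^2}\,\mathrm{erfc}\,t\,dt,\qquad A_2(y)=\frac1{\sqrt{2\pi}}\int_0^\infty e^{-2(t-y)^2}\,t\Big(\frac{e^{-t^2}}{\sqrt\pi}-t\,\mathrm{erfc}\,t\Big)dt,$$ $$A_3(y)=\frac14\big(1+\mathrm{erf}(\sqrt2 y)\big)\Big(-\frac{y e^{-2y^2}}{\sqrt{2\pi}}+\Big(\frac14+y^2\Big)\big(1-\mathrm{erf}(\sqrt2 y)\big)\Big),$$ $$A_4(y)=-\frac1{\sqrt{2\pi}}\int_0^\infty dt_1\int_0^{t_1}dt_2\,\frac1{t_1-t_2}\Big(e^{-2(t_1-y)^2}\big(\mathrm{erf}(t_1-t_2)+\mathrm{erf}(\sqrt2(t_2-y))\big)+e^{-2(t_2-y)^2}\big(\mathrm{erf}(t_1-t_2)-\mathrm{erf}(\sqrt2(t_1-y))\big)\Big).$$ Then, as $y\to-\infty$, $$A(y)\sim\frac{|y|\,e^{-2y^2}}{2(2\pi)^{1/2}}.$$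
   Context: $A(y)$ is the function such that the edge-scaled density of the soft-disk two-dimensional one-component plasma satisfies $\rho^{\rm edge}_{(1)}(y;\Gamma)=\rho^{\rm edge}_{(1)}(y;2)-\frac{\Gamma-2}{\pi}A(y)+\mathcal O((\Gamma-2)^2)$. $\mathrm{erf}$ is the error function and $\mathrm{erfc}=1-\mathrm{erf}$. *)

theory Defs
  imports "HOL-Analysis.Analysis" "HOL-Library.Landau_Symbols"
begin

definition erfc :: "real \<Rightarrow> real" where
  "erfc x = 2 / sqrt pi * integral {x..} (\<lambda>t. exp (- (t\<^sup>2)))"

definition erf :: "real \<Rightarrow> real" where
  "erf x = 1 - erfc x"

definition A1 :: "real \<Rightarrow> real" where
  "A1 y = - (1 / (2 * sqrt (2 * pi))) *
     integral {0..} (\<lambda>t. exp (- 2 * (t - y)\<^sup>2) * erfc t)"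

definition A2 :: "real \<Rightarrow> real" where
  "A2 y = (1 / sqrt (2 * pi)) *
     integral {0..} (\<lambda>t. exp (- 2 * (t - y)\<^sup>2) * t *
        (exp (- (t\<^sup>2)) / sqrt pi - t * erfc t))"

definition A3 :: "real \<Rightarrow> real" where
  "A3 y = (1/4) * (1 + erf (sqrt 2 * y)) *
     (- (y * exp (- 2 * y\<^sup>2)) / sqrt (2 * pi)
      + (1/4 + y\<^sup>2) * (1 - erf (sqrt 2 * y)))"

definition A4 :: "real \<Rightarrow> real" where
  "A4 y = - (1 / sqrt (2 * pi)) *
     integral {0..} (\<lambda>t1. integral {0..t1} (\<lambda>t2.
        (1 / (t1 - t2)) *
        (exp (- 2 * (t1 - y)\<^sup>2) * (erf (t1 - t2) + erf (sqrt 2 * (t2 - y)))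
         + exp (- 2 * (t2 - y)\<^sup>2) * (erf (t1 - t2) - erf (sqrt 2 * (t1 - y))))))"

definition A :: "real \<Rightarrow> real" where
  "A y = A1 y + A2 y + A3 y + A4 y"

end

theory Submission
  imports Defs "HOL-Probability.Probability" "HOL-Real_Asymp.Real_Asymp"
begin

text \<open>As \<open>y = -a \<rightarrow> -\<infinity>\<close> the term \<open>A3\<close> alone carries the asymptotics: there
  \<open>1 + erf (\<surd>2 y) = erfc (\<surd>2 a)\<close>, and the Mills ratio \<open>erfc s \<sim> exp (-s\<^sup>2) / (\<surd>\<pi> s)\<close>
  turns \<open>A3 (-a)\<close> into \<open>a exp (-2a\<^sup>2) / (2 \<surd>(2\<pi>))\<close> to leading order. In \<open>A1\<close>, \<open>A2\<close>
  and \<open>A4\<close> the Gaussian weight satisfies \<open>exp (-2(t + a)\<^sup>2) \<le> exp (-2a\<^sup>2) exp (-4at)\<close>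
  for \<open>t \<ge> 0\<close>, and all other factors grow at most polynomially; for \<open>A4\<close> the apparent
  singularity at \<open>t1 = t2\<close> cancels because \<open>erf\<close> is Lipschitz. Hence these three terms are
  \<open>O(exp (-2a\<^sup>2))\<close>, which is \<open>o(a exp (-2a\<^sup>2))\<close>.\<close>

text \<open>No integrability of \<open>f\<close> is needed: a non-integrable \<open>f\<close> has integral \<open>0\<close>.\<close>
lemma abs_integral_le_integral:
  fixes f g :: "real \<Rightarrow> real"
  assumes "g integrable_on S" "\<And>x. x \<in> S \<Longrightarrow> \<bar>f x\<bar> \<le> g x"
  shows "\<bar>integral S f\<bar> \<le> integral S g"
proof (cases "f integrable_on S")
  case True
  then show ?thesis using integral_norm_bound_integral[OF True assms(1)] assms(2) by auto
next
  case False
  have "integral S g \<ge> 0" using assms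
    by (intro Henstock_Kurzweil_Integration.integral_nonneg) (auto intro: order_trans[OF abs_ge_zero])
  then show ?thesis using False by (simp add: not_integrable_integral)
qed

lemma abs_integral_atLeast_0_le:
  fixes f :: "real \<Rightarrow> real"
  assumes "\<And>t. 0 \<le> t \<Longrightarrow> \<bar>f t\<bar> \<le> M * exp (- t)"
  shows "\<bar>integral {0..} f\<bar> \<le> M"
proof -
  have exp_int: "((\<lambda>t::real. exp (- 1 * t)) has_integral 1) {0..}"
    using has_integral_exp_minus_to_infinity[of 1 0] by simp
  have "\<bar>integral {0..} f\<bar> \<le> integral {0..} (\<lambda>t. M * exp (- t))"
    using exp_int assms by (intro abs_integral_le_integral integrable_on_mult_right) auto
  also have "\<dots> = M" using integral_unique[OF exp_int] by simp
  finally show ?thesis .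
qed

lemma has_integral_atLeast_of_deriv:
  fixes F h :: "real \<Rightarrow> real"
  assumes deriv: "\<And>t. a \<le> t \<Longrightarrow> (F has_real_derivative h t) (at t)"
    and nonneg: "\<And>t. a \<le> t \<Longrightarrow> 0 \<le> h t" and cont: "continuous_on {a..} h"
    and lim: "(F \<longlongrightarrow> L) at_top"
  shows "(h has_integral (L - F a)) {a..}"
proof (rule has_integral_to_inf)
  show "h integrable_on {a..y}" for y
    by (rule integrable_continuous_interval) (rule continuous_on_subset[OF cont], auto)
  have "(h has_integral (F y - F a)) {a..y}" if "a \<le> y" for y
    by (rule fundamental_theorem_of_calculus[OF that])
       (auto intro!: has_field_derivative_at_within deriv
             simp flip: has_real_derivative_iff_has_vector_derivative)
  then have "\<forall>\<^sub>F y in at_top. integral {a..y} h = F y - F a"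
    by (auto simp: eventually_at_top_linorder intro!: exI[of _ a] integral_unique)
  moreover have "((\<lambda>y. F y - F a) \<longlongrightarrow> L - F a) at_top" by (intro tendsto_intros lim)
  ultimately show "((\<lambda>y. integral {a..y} h) \<longlongrightarrow> L - F a) at_top"
    by (simp add: filterlim_cong)
qed (use nonneg in auto)

subsection \<open>The Gaussian tail\<close>

definition gauss_tail :: "real \<Rightarrow> real" where
  "gauss_tail x = integral {x..} (\<lambda>t. exp (- (t\<^sup>2)))"

lemma gauss_integrable_on_atLeast: "(\<lambda>t::real. exp (- (t\<^sup>2))) integrable_on {x..}"
proof (rule measurable_bounded_by_integrable_imp_integrable_real
    [where g = "\<lambda>t. exp (1/4) * exp (- 1 * t)"])
  show "(\<lambda>t. exp (- (t\<^sup>2))) \<in> borel_measurable (lebesgue_on {x..})"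
    by (intro continuous_imp_measurable_on_sets_lebesgue continuous_intros) auto
  show "(\<lambda>t. exp (1/4) * exp (- 1 * t)) integrable_on {x..}"
    by (intro integrable_on_mult_right integrable_on_exp_minus_to_infinity) auto
  show "\<bar>exp (- (t\<^sup>2))\<bar> \<le> exp (1/4) * exp (- 1 * t)" for t :: real
  proof -
    have "- (t\<^sup>2) \<le> 1/4 + - 1 * t"
      using zero_le_power2[of "t - 1/2"] by (simp add: power2_eq_square algebra_simps)
    then show ?thesis by (simp flip: exp_add)
  qed
qed auto

lemma gauss_tail_split:
  assumes "x \<le> z"
  shows "gauss_tail x = integral {x..z} (\<lambda>t. exp (- (t\<^sup>2))) + gauss_tail z"
proof -
  have "((\<lambda>t. exp (- (t\<^sup>2))) has_integral
      (integral {x..z} (\<lambda>t. exp (- (t\<^sup>2))) + gauss_tail z)) ({x..z} \<union> {z..})"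
    unfolding gauss_tail_def
  proof (rule has_integral_Un)
    have "{x..z} \<inter> {z..} = {z}" using assms by auto
    then show "negligible ({x..z} \<inter> {z..})" by simp
  qed (auto intro!: integrable_integral gauss_integrable_on_atLeast
          integrable_continuous_interval continuous_intros)
  moreover have "{x..z} \<union> {z..} = {x..}" using assms by auto
  ultimately show ?thesis by (simp add: gauss_tail_def integral_unique)
qed

lemma gauss_integral_interval_bounds:
  fixes x z :: real
  assumes "x \<le> z"
  shows "0 \<le> integral {x..z} (\<lambda>t. exp (- (t\<^sup>2)))" "integral {x..z} (\<lambda>t. exp (- (t\<^sup>2))) \<le> z - x"
proof -
  have int: "(\<lambda>t. exp (- (t\<^sup>2))) integrable_on {x..z}"
    by (intro integrable_continuous_interval continuous_intros)
  show "0 \<le> integral {x..z} (\<lambda>t. exp (- (t\<^sup>2)))"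
    by (rule Henstock_Kurzweil_Integration.integral_nonneg[OF int]) auto
  have "integral {x..z} (\<lambda>t. exp (- (t\<^sup>2))) \<le> integral {x..z} (\<lambda>t. 1)"
    by (rule integral_le[OF int]) auto
  then show "integral {x..z} (\<lambda>t. exp (- (t\<^sup>2))) \<le> z - x" using assms by simp
qed

lemma gauss_tail_nonneg: "0 \<le> gauss_tail x"
  unfolding gauss_tail_def
  by (rule Henstock_Kurzweil_Integration.integral_nonneg[OF gauss_integrable_on_atLeast]) auto

lemma gauss_tail_antimono: "x \<le> z \<Longrightarrow> gauss_tail z \<le> gauss_tail x"
  using gauss_tail_split gauss_integral_interval_bounds by fastforce

lemma gauss_tail_diff_le: "x \<le> z \<Longrightarrow> gauss_tail x - gauss_tail z \<le> z - x"
  using gauss_tail_split gauss_integral_interval_bounds by fastforce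

lemma gauss_tail_0: "gauss_tail 0 = sqrt pi / 2"
proof -
  have "((\<lambda>x. indicator {0..} x *\<^sub>R exp (- x\<^sup>2) :: real) has_integral (sqrt pi / 2)) UNIV"
    using gaussian_moment_0 has_integral_integral_lborel has_bochner_integral_iff by metis
  then have "((\<lambda>x. if x \<in> {0..} then exp (- x\<^sup>2) else 0 :: real) has_integral (sqrt pi / 2)) UNIV"
    by (rule has_integral_cong[THEN iffD1, rotated]) (auto simp: indicator_def)
  then have "((\<lambda>x. exp (- x\<^sup>2) :: real) has_integral (sqrt pi / 2)) {0..}"
    unfolding has_integral_restrict_UNIV by simp
  then show ?thesis by (simp add: gauss_tail_def integral_unique)
qed

lemma gauss_tail_uminus_nonneg:
  assumes "0 \<le> x"
  shows "gauss_tail (- x) = sqrt pi - gauss_tail x"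
proof -
  have "((\<lambda>t. exp (- (t\<^sup>2))) has_integral integral {0..x} (\<lambda>t. exp (- (t\<^sup>2)))) {0..x}"
    by (intro integrable_integral integrable_continuous_interval continuous_intros)
  then have "((\<lambda>t. exp (- ((- t)\<^sup>2))) has_integral integral {0..x} (\<lambda>t. exp (- (t\<^sup>2)))) {- x..- 0}"
    by (subst has_integral_reflect_real)
  then have "integral {- x..0} (\<lambda>t. exp (- (t\<^sup>2))) = integral {0..x} (\<lambda>t. exp (- (t\<^sup>2)))"
    by (simp add: integral_unique)
  then show ?thesis
    using gauss_tail_split[of "- x" 0] gauss_tail_split[of 0 x] gauss_tail_0 assms by simp
qed

lemma gauss_tail_uminus: "gauss_tail (- x) = sqrt pi - gauss_tail x"
  using gauss_tail_uminus_nonneg[of x] gauss_tail_uminus_nonneg[of "- x"] by (cases "0 \<le> x") auto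

lemma gauss_tail_le:
  assumes "0 < s"
  shows "gauss_tail s \<le> exp (- (s\<^sup>2)) / (2 * s)"
proof -
  have int: "((\<lambda>t. t / s * exp (- (t\<^sup>2))) has_integral (0 - (- exp (- (s\<^sup>2)) / (2 * s)))) {s..}"
  proof (rule has_integral_atLeast_of_deriv[where F = "\<lambda>t. - exp (- (t\<^sup>2)) / (2 * s)"])
    show "((\<lambda>t. - exp (- (t\<^sup>2)) / (2 * s)) has_real_derivative t / s * exp (- (t\<^sup>2))) (at t)"
      if "s \<le> t" for t
      using assms by (auto intro!: derivative_eq_intros simp: field_simps)
    show "continuous_on {s..} (\<lambda>t. t / s * exp (- (t\<^sup>2)))"
      using assms by (intro continuous_intros) auto
    show "((\<lambda>t. - exp (- (t\<^sup>2)) / (2 * s)) \<longlongrightarrow> 0) at_top" using assms by real_asymp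
  qed (use assms in auto)
  have "gauss_tail s \<le> integral {s..} (\<lambda>t. t / s * exp (- (t\<^sup>2)))"
    unfolding gauss_tail_def using int assms
    by (intro integral_le[OF gauss_integrable_on_atLeast]) (auto simp: field_simps)
  also have "\<dots> = exp (- (s\<^sup>2)) / (2 * s)" using integral_unique[OF int] by simp
  finally show ?thesis .
qed

lemma gauss_tail_ge:
  assumes "0 < s"
  shows "exp (- (s\<^sup>2)) / (2 * s) \<le> gauss_tail s * (1 + 1 / (2 * s\<^sup>2))"
proof -
  have int: "((\<lambda>t. exp (- (t\<^sup>2)) * (1 + 1 / (2 * t\<^sup>2))) has_integral (0 - (- exp (- (s\<^sup>2)) / (2 * s)))) {s..}"
  proof (rule has_integral_atLeast_of_deriv[where F = "\<lambda>t. - exp (- (t\<^sup>2)) / (2 * t)"])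
    show "((\<lambda>t. - exp (- (t\<^sup>2)) / (2 * t)) has_real_derivative exp (- (t\<^sup>2)) * (1 + 1 / (2 * t\<^sup>2))) (at t)"
      if "s \<le> t" for t
      using assms that by (auto intro!: derivative_eq_intros simp: field_simps power2_eq_square)
    show "continuous_on {s..} (\<lambda>t. exp (- (t\<^sup>2)) * (1 + 1 / (2 * t\<^sup>2)))"
      using assms by (intro continuous_intros) auto
    show "((\<lambda>t::real. - exp (- (t\<^sup>2)) / (2 * t)) \<longlongrightarrow> 0) at_top" by real_asymp
  qed (use assms in auto)
  have "exp (- (s\<^sup>2)) / (2 * s) = integral {s..} (\<lambda>t. exp (- (t\<^sup>2)) * (1 + 1 / (2 * t\<^sup>2)))"
    using int by (simp add: integral_unique)
  also have "\<dots> \<le> integral {s..} (\<lambda>t. exp (- (t\<^sup>2)) * (1 + 1 / (2 * s\<^sup>2)))"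
  proof (rule integral_le)
    show "(\<lambda>t. exp (- (t\<^sup>2)) * (1 + 1 / (2 * t\<^sup>2))) integrable_on {s..}" using int by blast
    show "(\<lambda>t. exp (- (t\<^sup>2)) * (1 + 1 / (2 * s\<^sup>2))) integrable_on {s..}"
      by (rule integrable_on_mult_left[OF gauss_integrable_on_atLeast])
    fix t assume "t \<in> {s..}"
    then have "0 < t" "s\<^sup>2 \<le> t\<^sup>2" using assms by (auto intro: power_mono)
    then have "1 / (2 * t\<^sup>2) \<le> 1 / (2 * s\<^sup>2)" using assms by (intro divide_left_mono) auto
    then show "exp (- (t\<^sup>2)) * (1 + 1 / (2 * t\<^sup>2)) \<le> exp (- (t\<^sup>2)) * (1 + 1 / (2 * s\<^sup>2))"
      by (intro mult_left_mono) auto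
  qed
  also have "\<dots> = gauss_tail s * (1 + 1 / (2 * s\<^sup>2))" by (simp add: gauss_tail_def)
  finally show ?thesis .
qed

subsection \<open>The error functions\<close>

lemma erfc_eq_gauss_tail: "erfc x = 2 / sqrt pi * gauss_tail x"
  by (simp add: erfc_def gauss_tail_def)

lemma erfc_uminus: "erfc (- x) = 2 - erfc x"
  by (simp add: erfc_eq_gauss_tail gauss_tail_uminus field_simps)

lemma erfc_nonneg: "0 \<le> erfc x"
  by (simp add: erfc_eq_gauss_tail gauss_tail_nonneg)

lemma erfc_0: "erfc 0 = 1"
  by (simp add: erfc_eq_gauss_tail gauss_tail_0)

lemma erfc_antimono: "x \<le> z \<Longrightarrow> erfc z \<le> erfc x"
  by (simp add: erfc_eq_gauss_tail gauss_tail_antimono divide_right_mono)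

lemma erfc_le_1: "0 \<le> x \<Longrightarrow> erfc x \<le> 1"
  using erfc_antimono[of 0 x] erfc_0 by simp

lemma erfc_le:
  assumes "0 < s"
  shows "erfc s \<le> exp (- (s\<^sup>2)) / (sqrt pi * s)"
proof -
  have "erfc s \<le> 2 / sqrt pi * (exp (- (s\<^sup>2)) / (2 * s))"
    unfolding erfc_eq_gauss_tail using gauss_tail_le[OF assms] by (intro mult_left_mono) auto
  then show ?thesis by simp
qed

lemma erfc_le_exp:
  assumes "1 \<le> s"
  shows "erfc s \<le> exp (- s)"
proof -
  have "erfc s \<le> exp (- (s\<^sup>2)) / (sqrt pi * s)" using assms by (intro erfc_le) auto
  also have "\<dots> \<le> exp (- (s\<^sup>2)) / 1"
  proof (rule divide_left_mono)
    have "1 \<le> sqrt pi" using pi_gt3 by simp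
    then show "1 \<le> sqrt pi * s" using assms mult_mono[of 1 "sqrt pi" 1 s] by simp
  qed (use assms in auto)
  also have "\<dots> \<le> exp (- s)" using assms by (simp add: power2_eq_square)
  finally show ?thesis .
qed

lemma erfc_tendsto_0: "(erfc \<longlongrightarrow> 0) at_top"
proof (rule tendsto_sandwich[where f = "\<lambda>_. 0" and h = "\<lambda>s. exp (- (s\<^sup>2)) / (sqrt pi * s)"])
  show "\<forall>\<^sub>F s in at_top. erfc s \<le> exp (- (s\<^sup>2)) / (sqrt pi * s)"
    using eventually_gt_at_top[of 0] by eventually_elim (rule erfc_le)
  show "((\<lambda>s::real. exp (- (s\<^sup>2)) / (sqrt pi * s)) \<longlongrightarrow> 0) at_top" by real_asymp
qed (auto simp: erfc_nonneg)

lemma erfc_mills_ratio: "((\<lambda>s. sqrt pi * s * exp (s\<^sup>2) * erfc s) \<longlongrightarrow> 1) at_top"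
proof (rule tendsto_sandwich)
  show "\<forall>\<^sub>F s in at_top. 1 / (1 + 1 / (2 * s\<^sup>2)) \<le> sqrt pi * s * exp (s\<^sup>2) * erfc s"
    using eventually_gt_at_top[of 0]
  proof eventually_elim
    case (elim s)
    have "1 = exp (- (s\<^sup>2)) / (2 * s) * (2 * s * exp (s\<^sup>2))" using elim by (simp flip: exp_add)
    also have "\<dots> \<le> gauss_tail s * (1 + 1 / (2 * s\<^sup>2)) * (2 * s * exp (s\<^sup>2))"
      using gauss_tail_ge[OF elim] elim by (intro mult_right_mono) auto
    also have "\<dots> = sqrt pi * s * exp (s\<^sup>2) * erfc s * (1 + 1 / (2 * s\<^sup>2))"
      by (simp add: erfc_eq_gauss_tail)
    finally have "1 \<le> sqrt pi * s * exp (s\<^sup>2) * erfc s * (1 + 1 / (2 * s\<^sup>2))" .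
    moreover have "0 < 1 + 1 / (2 * s\<^sup>2)" using elim by (simp add: add_pos_nonneg)
    ultimately show ?case by (simp only: pos_divide_le_eq)
  qed
  show "\<forall>\<^sub>F s in at_top. sqrt pi * s * exp (s\<^sup>2) * erfc s \<le> 1"
    using eventually_gt_at_top[of 0]
  proof eventually_elim
    case (elim s)
    have "sqrt pi * s * exp (s\<^sup>2) * erfc s \<le> sqrt pi * s * exp (s\<^sup>2) * (exp (- (s\<^sup>2)) / (sqrt pi * s))"
      using erfc_le[OF elim] elim by (intro mult_left_mono) auto
    also have "\<dots> = 1" using elim by (simp flip: exp_add)
    finally show ?case .
  qed
  show "((\<lambda>s::real. 1 / (1 + 1 / (2 * s\<^sup>2))) \<longlongrightarrow> 1) at_top" by real_asymp
qed simp

lemma erf_0: "erf 0 = 0"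
  by (simp add: erf_def erfc_0)

lemma erf_mono: "z \<le> x \<Longrightarrow> erf z \<le> erf x"
  using erfc_antimono[of z x] by (simp add: erf_def)

lemma erf_nonneg: "0 \<le> x \<Longrightarrow> 0 \<le> erf x"
  using erf_mono[of 0 x] by (simp add: erf_0)

lemma erf_le_1: "erf x \<le> 1"
  using erfc_nonneg[of x] by (simp add: erf_def)

lemma erf_diff_le:
  assumes "z \<le> x"
  shows "erf x - erf z \<le> 2 / sqrt pi * (x - z)"
proof -
  have "erf x - erf z = 2 / sqrt pi * (gauss_tail z - gauss_tail x)"
    by (simp add: erf_def erfc_eq_gauss_tail right_diff_distrib)
  also have "\<dots> \<le> 2 / sqrt pi * (x - z)"
    using gauss_tail_diff_le[OF assms] by (intro mult_left_mono) auto
  finally show ?thesis .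
qed

subsection \<open>Bounds for \<open>A1\<close> and \<open>A2\<close>\<close>

lemma sqrt_2pi_ge_1: "1 \<le> sqrt (2 * pi)"
  using pi_gt3 by simp

lemma abs_mult_le_abs: "\<bar>c\<bar> \<le> 1 \<Longrightarrow> \<bar>c * x\<bar> \<le> \<bar>x :: real\<bar>"
  by (simp add: abs_mult mult_left_le_one_le)

lemma exp_shifted_gauss_le:
  fixes t a c :: real
  assumes "0 \<le> t" "c \<le> 4 * a"
  shows "exp (- 2 * (t + a)\<^sup>2) \<le> exp (- 2 * a\<^sup>2) * exp (- c * t)"
proof -
  have "c * t \<le> 4 * a * t" using assms by (intro mult_right_mono) auto
  moreover have "- 2 * (t + a)\<^sup>2 = - 2 * a\<^sup>2 - 4 * a * t - 2 * t\<^sup>2"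
    by (simp add: power2_eq_square algebra_simps)
  ultimately have "- 2 * (t + a)\<^sup>2 \<le> - 2 * a\<^sup>2 + - c * t"
    using zero_le_power2[of t] by linarith
  then show ?thesis by (simp flip: exp_add)
qed

lemma A1_uminus_bound:
  assumes "1 \<le> a"
  shows "\<bar>A1 (- a)\<bar> \<le> exp (- 2 * a\<^sup>2)"
proof -
  have "\<bar>integral {0..} (\<lambda>t. exp (- 2 * (t + a)\<^sup>2) * erfc t)\<bar> \<le> exp (- 2 * a\<^sup>2)"
  proof (rule abs_integral_atLeast_0_le)
    fix t :: real assume t: "0 \<le> t"
    have "\<bar>exp (- 2 * (t + a)\<^sup>2) * erfc t\<bar> \<le> exp (- 2 * (t + a)\<^sup>2)"
      using erfc_nonneg[of t] erfc_le_1[OF t] by (simp add: mult_left_le)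
    also have "\<dots> \<le> exp (- 2 * a\<^sup>2) * exp (- t)"
      using exp_shifted_gauss_le[of t 1 a] t assms by simp
    finally show "\<bar>exp (- 2 * (t + a)\<^sup>2) * erfc t\<bar> \<le> exp (- 2 * a\<^sup>2) * exp (- t)" .
  qed
  moreover have "\<bar>A1 (- a)\<bar> \<le> \<bar>integral {0..} (\<lambda>t. exp (- 2 * (t + a)\<^sup>2) * erfc t)\<bar>"
    unfolding A1_def diff_minus_eq_add
    by (intro abs_mult_le_abs) (use sqrt_2pi_ge_1 in \<open>simp del: real_sqrt_ge_1_iff\<close>)
  ultimately show ?thesis by linarith
qed

lemma A2_uminus_bound:
  assumes "1 \<le> a"
  shows "\<bar>A2 (- a)\<bar> \<le> exp (- 2 * a\<^sup>2)"
proof -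
  let ?f = "\<lambda>t. exp (- 2 * (t + a)\<^sup>2) * t * (exp (- (t\<^sup>2)) / sqrt pi - t * erfc t)"
  have "\<bar>integral {0..} ?f\<bar> \<le> exp (- 2 * a\<^sup>2)"
  proof (rule abs_integral_atLeast_0_le)
    fix t :: real assume t: "0 \<le> t"
    have "0 \<le> exp (- (t\<^sup>2)) / sqrt pi" "exp (- (t\<^sup>2)) / sqrt pi \<le> 1"
      using pi_gt3 by (auto simp: divide_le_eq order_trans[of _ 1])
    moreover have "0 \<le> t * erfc t" "t * erfc t \<le> t"
      using t erfc_nonneg[of t] erfc_le_1[OF t] by (auto simp: mult_left_le)
    ultimately have inner: "\<bar>exp (- (t\<^sup>2)) / sqrt pi - t * erfc t\<bar> \<le> 1 + t"
      using t unfolding abs_le_iff by linarith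
    have poly: "t * (1 + t) \<le> exp t * exp t"
      using t exp_ge_add_one_self[of t] exp_ge_zero[of t] by (intro mult_mono) linarith+
    have "\<bar>?f t\<bar> = exp (- 2 * (t + a)\<^sup>2) * (t * \<bar>exp (- (t\<^sup>2)) / sqrt pi - t * erfc t\<bar>)"
      using t by (simp add: abs_mult)
    also have "\<dots> \<le> exp (- 2 * a\<^sup>2) * exp (- 4 * t) * (t * (1 + t))"
      using exp_shifted_gauss_le[of t 4 a] t assms inner by (intro mult_mono) auto
    also have "\<dots> \<le> exp (- 2 * a\<^sup>2) * exp (- 4 * t) * (exp t * exp t)"
      using poly by (intro mult_left_mono) auto
    also have "\<dots> = exp (- 2 * a\<^sup>2) * exp (- 2 * t)"
      by (simp add: mult.assoc flip: exp_add)
    also have "\<dots> \<le> exp (- 2 * a\<^sup>2) * exp (- t)"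
      using t by simp
    finally show "\<bar>?f t\<bar> \<le> exp (- 2 * a\<^sup>2) * exp (- t)" .
  qed
  moreover have "\<bar>A2 (- a)\<bar> \<le> \<bar>integral {0..} ?f\<bar>"
    unfolding A2_def diff_minus_eq_add
    by (intro abs_mult_le_abs) (use sqrt_2pi_ge_1 in \<open>simp del: real_sqrt_ge_1_iff\<close>)
  ultimately show ?thesis by linarith
qed

subsection \<open>The double integral \<open>A4\<close>\<close>

definition A4_kernel :: "real \<Rightarrow> real \<Rightarrow> real \<Rightarrow> real" where
  "A4_kernel y t1 t2 = 1 / (t1 - t2) *
     (exp (- 2 * (t1 - y)\<^sup>2) * (erf (t1 - t2) + erf (sqrt 2 * (t2 - y)))
      + exp (- 2 * (t2 - y)\<^sup>2) * (erf (t1 - t2) - erf (sqrt 2 * (t1 - y))))"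

lemma A4_eq_integral_A4_kernel:
  "A4 y = - (1 / sqrt (2 * pi)) * integral {0..} (\<lambda>t1. integral {0..t1} (A4_kernel y t1))"
  by (simp add: A4_def A4_kernel_def[abs_def])

lemma A4_kernel_near_diagonal:
  assumes a: "1 \<le> a" and t: "0 \<le> t2" "t2 \<le> t1" "t1 \<le> t2 + 1"
  shows "\<bar>A4_kernel (- a) t1 t2\<bar> \<le> 24 * (1 + a + t2) * exp (- 2 * (t2 + a)\<^sup>2) * exp (- (t1 - t2))"
proof (cases "t1 = t2")
  case True
  \<comment> \<open>On the diagonal the kernel is \<open>0\<close>, since \<open>1 / 0 = 0\<close> in HOL.\<close>
  then show ?thesis using a t by (simp add: A4_kernel_def)
next
  case False
  define d where "d = t1 - t2"
  define u where "u = 2 * d * (t1 + t2 + 2 * a)"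
  define E1 E2 where "E1 = exp (- 2 * (t1 + a)\<^sup>2)" and "E2 = exp (- 2 * (t2 + a)\<^sup>2)"
  define e1 e2 where "e1 = erf (sqrt 2 * (t1 + a))" and "e2 = erf (sqrt 2 * (t2 + a))"
  have d: "0 < d" "d \<le> 1" using False t by (auto simp: d_def)
  have lip: "2 / sqrt pi \<le> 2" "2 / sqrt pi * sqrt 2 \<le> 2"
    using pi_gt3 by (simp_all add: divide_le_eq)
  have ed: "0 \<le> erf d" "erf d \<le> 2 * d"
  proof -
    show "0 \<le> erf d" using d by (intro erf_nonneg) simp
    have "erf d \<le> 2 / sqrt pi * d" using erf_diff_le[of 0 d] d by (simp add: erf_0)
    also have "\<dots> \<le> 2 * d" using lip d by (intro mult_right_mono) auto
    finally show "erf d \<le> 2 * d" .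
  qed
  have e12: "0 \<le> e2" "e2 \<le> e1" "e1 \<le> 1" "e1 - e2 \<le> 2 * d"
  proof -
    show "0 \<le> e2" "e2 \<le> e1" "e1 \<le> 1"
      using a t by (auto simp: e1_def e2_def intro: erf_nonneg erf_mono erf_le_1)
    have "e1 - e2 \<le> 2 / sqrt pi * (sqrt 2 * (t1 + a) - sqrt 2 * (t2 + a))"
      unfolding e1_def e2_def using t by (intro erf_diff_le) auto
    also have "\<dots> = 2 / sqrt pi * sqrt 2 * d" using pi_gt_zero by (simp add: d_def field_simps)
    also have "\<dots> \<le> 2 * d" using lip d by (intro mult_right_mono) auto
    finally show "e1 - e2 \<le> 2 * d" .
  qed
  have E: "0 < E1" "E1 \<le> E2" "E2 - E1 \<le> u * E2"
  proof -
    have "- 2 * (t1 + a)\<^sup>2 = - 2 * (t2 + a)\<^sup>2 + - u"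
      by (simp add: u_def d_def power2_eq_square algebra_simps)
    then have E1: "E1 = E2 * exp (- u)" by (simp add: E1_def E2_def flip: exp_add)
    have u: "0 \<le> u" using d t a by (simp add: u_def)
    show "0 < E1" by (simp add: E1_def)
    show "E1 \<le> E2" using E1 u by (simp add: E2_def mult_le_cancel_left1)
    have "E2 * (1 - u) \<le> E2 * exp (- u)"
      using exp_ge_add_one_self[of "- u"] by (intro mult_left_mono) (auto simp: E2_def)
    then show "E2 - E1 \<le> u * E2" using E1 by (simp add: algebra_simps)
  qed
  \<comment> \<open>The numerator is a difference of nonnegative terms, each \<open>O(d)\<close> by the Lipschitz bounds.\<close>
  have "E1 * (erf d + e2) + E2 * (erf d - e1) = erf d * (E1 + E2) - (e1 * (E2 - E1) + E1 * (e1 - e2))"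
    by (simp add: algebra_simps)
  moreover have "0 \<le> erf d * (E1 + E2)" "erf d * (E1 + E2) \<le> 2 * d * (2 * E2)"
    using ed E by (simp, intro mult_mono, auto)
  moreover have "0 \<le> e1 * (E2 - E1)" "e1 * (E2 - E1) \<le> 1 * (u * E2)"
    using e12 E by (simp, intro mult_mono, auto)
  moreover have "0 \<le> E1 * (e1 - e2)" "E1 * (e1 - e2) \<le> E2 * (2 * d)"
    using e12 E by (simp, intro mult_mono, auto)
  ultimately have "\<bar>E1 * (erf d + e2) + E2 * (erf d - e1)\<bar> \<le> d * (E2 * (6 + 2 * (t1 + t2 + 2 * a)))"
    by (simp add: u_def algebra_simps abs_le_iff)
  moreover have "A4_kernel (- a) t1 t2 = (E1 * (erf d + e2) + E2 * (erf d - e1)) / d"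
    by (simp add: A4_kernel_def d_def E1_def E2_def e1_def e2_def)
  ultimately have "\<bar>A4_kernel (- a) t1 t2\<bar> \<le> E2 * (6 + 2 * (t1 + t2 + 2 * a))"
    using d by (simp add: divide_le_eq mult.commute)
  also have "\<dots> \<le> E2 * (8 * (1 + a + t2))"
    using a t by (intro mult_left_mono) (auto simp: E2_def)
  also have "\<dots> \<le> E2 * (8 * (1 + a + t2)) * (3 * exp (- d))"
  proof -
    have "1 \<le> 3 * exp (- 1 :: real)" using exp_le by (simp add: exp_minus field_simps)
    also have "\<dots> \<le> 3 * exp (- d)" using d by simp
    finally have "1 \<le> 3 * exp (- d)" .
    moreover have "0 \<le> E2 * (8 * (1 + a + t2))" using a t by (simp add: E2_def)
    ultimately show ?thesis using mult_left_mono[of 1 "3 * exp (- d)"] by fastforce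
  qed
  also have "\<dots> = 24 * (1 + a + t2) * exp (- 2 * (t2 + a)\<^sup>2) * exp (- (t1 - t2))"
    by (simp add: E2_def d_def)
  finally show ?thesis .
qed

lemma A4_kernel_off_diagonal:
  assumes "0 \<le> a" "0 \<le> t2" "t2 + 1 \<le> t1"
  shows "\<bar>A4_kernel (- a) t1 t2\<bar> \<le> 2 * exp (- 2 * (t1 + a)\<^sup>2) + exp (- 2 * (t2 + a)\<^sup>2) * exp (- (t1 - t2))"
proof -
  define d where "d = t1 - t2"
  define E1 E2 where "E1 = exp (- 2 * (t1 + a)\<^sup>2)" and "E2 = exp (- 2 * (t2 + a)\<^sup>2)"
  define e1 e2 where "e1 = erf (sqrt 2 * (t1 + a))" and "e2 = erf (sqrt 2 * (t2 + a))"
  have d: "1 \<le> d" using assms by (simp add: d_def)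
  have "t1 + a \<le> sqrt 2 * (t1 + a)" using assms mult_right_mono[of 1 "sqrt 2" "t1 + a"] by simp
  then have "d \<le> sqrt 2 * (t1 + a)" using assms unfolding d_def by linarith
  then have ed_e1: "erf d \<le> e1" unfolding e1_def by (rule erf_mono)
  have "0 \<le> erf d + e2" "erf d + e2 \<le> 2"
    using assms d erf_nonneg[of d] erf_le_1[of d] erf_nonneg[of "sqrt 2 * (t2 + a)"]
      erf_le_1[of "sqrt 2 * (t2 + a)"]
    unfolding e2_def by simp_all
  then have "0 \<le> E1 * (erf d + e2)" "E1 * (erf d + e2) \<le> E1 * 2"
    by (simp_all add: E1_def)
  moreover have "0 \<le> E2 * (e1 - erf d)" "E2 * (e1 - erf d) \<le> E2 * exp (- d)"
  proof -
    show "0 \<le> E2 * (e1 - erf d)" using ed_e1 by (simp add: E2_def)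
    have "e1 - erf d \<le> erfc d" using erf_le_1[of "sqrt 2 * (t1 + a)"] by (simp add: e1_def erf_def)
    also have "\<dots> \<le> exp (- d)" using d by (rule erfc_le_exp)
    finally show "E2 * (e1 - erf d) \<le> E2 * exp (- d)" by (simp add: E2_def)
  qed
  ultimately have N: "\<bar>E1 * (erf d + e2) + E2 * (erf d - e1)\<bar> \<le> 2 * E1 + E2 * exp (- d)"
    by (simp add: algebra_simps abs_le_iff)
  have "A4_kernel (- a) t1 t2 = (E1 * (erf d + e2) + E2 * (erf d - e1)) / d"
    by (simp add: A4_kernel_def d_def E1_def E2_def e1_def e2_def)
  then have "\<bar>A4_kernel (- a) t1 t2\<bar> \<le> \<bar>E1 * (erf d + e2) + E2 * (erf d - e1)\<bar>"
    using d mult_left_mono[of 1 d] by (simp add: divide_le_eq abs_divide)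
  with N have "\<bar>A4_kernel (- a) t1 t2\<bar> \<le> 2 * E1 + E2 * exp (- d)" by linarith
  then show ?thesis by (simp only: E1_def E2_def d_def)
qed

lemma A4_kernel_bound:
  assumes a: "1 \<le> a" and t: "0 \<le> t2" "t2 \<le> t1"
  shows "\<bar>A4_kernel (- a) t1 t2\<bar> \<le> 2 * exp (- 2 * a\<^sup>2) * exp (- 4 * a * t1)
           + 24 * ((1 + a) * exp (- 2 * a\<^sup>2) * exp (- t1) * exp (- (4 * a - 2) * t2))"
proof -
  let ?W = "(1 + a) * exp (- 2 * a\<^sup>2) * exp (- t1) * exp (- (4 * a - 2) * t2)"
  have E1: "exp (- 2 * (t1 + a)\<^sup>2) \<le> exp (- 2 * a\<^sup>2) * exp (- 4 * a * t1)"
    using exp_shifted_gauss_le[of t1 "4 * a" a] t by simp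
  have W: "(1 + a + t2) * exp (- 2 * (t2 + a)\<^sup>2) * exp (- (t1 - t2)) \<le> ?W"
  proof -
    have "1 + a + t2 \<le> (1 + a) * (1 + t2)" using a t by (simp add: algebra_simps)
    also have "\<dots> \<le> (1 + a) * exp t2" using a exp_ge_add_one_self[of t2] by (intro mult_left_mono) auto
    finally have "(1 + a + t2) * exp (- 2 * (t2 + a)\<^sup>2)
        \<le> (1 + a) * exp t2 * (exp (- 2 * a\<^sup>2) * exp (- 4 * a * t2))"
      using exp_shifted_gauss_le[of t2 "4 * a" a] a t by (intro mult_mono) auto
    then have "(1 + a + t2) * exp (- 2 * (t2 + a)\<^sup>2) * exp (- (t1 - t2))
        \<le> (1 + a) * exp t2 * (exp (- 2 * a\<^sup>2) * exp (- 4 * a * t2)) * exp (- (t1 - t2))"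
      by (intro mult_right_mono) auto
    also have "\<dots> = ?W"
      by (simp add: mult_ac algebra_simps flip: exp_add)
    finally show ?thesis .
  qed
  consider "t1 \<le> t2 + 1" | "t2 + 1 \<le> t1" by linarith
  then have "\<bar>A4_kernel (- a) t1 t2\<bar> \<le> 2 * exp (- 2 * (t1 + a)\<^sup>2)
      + 24 * ((1 + a + t2) * exp (- 2 * (t2 + a)\<^sup>2) * exp (- (t1 - t2)))"
  proof cases
    case 1
    then have "\<bar>A4_kernel (- a) t1 t2\<bar>
        \<le> 24 * ((1 + a + t2) * exp (- 2 * (t2 + a)\<^sup>2) * exp (- (t1 - t2)))"
      using A4_kernel_near_diagonal[OF a t] by (simp only: mult.assoc)
    then show ?thesis by (rule order_trans) simp
  next
    case 2
    have "exp (- 2 * (t2 + a)\<^sup>2) * exp (- (t1 - t2))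
        \<le> 24 * ((1 + a + t2) * exp (- 2 * (t2 + a)\<^sup>2) * exp (- (t1 - t2)))"
      using a t mult_right_mono[of 1 "24 * (1 + a + t2)" "exp (- 2 * (t2 + a)\<^sup>2) * exp (- (t1 - t2))"]
      by (simp add: algebra_simps)
    moreover have "0 \<le> a" using a by simp
    ultimately show ?thesis using A4_kernel_off_diagonal[of a t2 t1] 2 t by linarith
  qed
  then show ?thesis using E1 W by linarith
qed

lemma A4_inner_integral_bound:
  assumes a: "1 \<le> a" and t1: "0 \<le> t1"
  shows "\<bar>integral {0..t1} (A4_kernel (- a) t1)\<bar> \<le> 26 * exp (- 2 * a\<^sup>2) * exp (- t1)"
proof -
  define k where "k = 4 * a - 2"
  define R where "R = 2 * exp (- 2 * a\<^sup>2) * exp (- 4 * a * t1)"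
  define C where "C = 24 * ((1 + a) * exp (- 2 * a\<^sup>2) * exp (- t1))"
  have k: "0 < k" using a by (simp add: k_def)
  have C: "0 \<le> C" using a by (simp add: C_def)
  have exp_int: "((\<lambda>t2. C * exp (- k * t2)) has_integral C / k) {0..}"
    using has_integral_mult_right[OF has_integral_exp_minus_to_infinity[OF k, of 0], of C] by simp
  have "integral {0..t1} (\<lambda>t2. C * exp (- k * t2)) \<le> integral {0..} (\<lambda>t2. C * exp (- k * t2))"
    using exp_int C
    by (intro integral_subset_le) (auto intro!: integrable_continuous_interval continuous_intros)
  then have tail: "integral {0..t1} (\<lambda>t2. C * exp (- k * t2)) \<le> C / k"
    using integral_unique[OF exp_int] by simp
  have R_t1: "R * t1 \<le> 2 * exp (- 2 * a\<^sup>2) * exp (- t1)"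
  proof -
    have "t1 \<le> exp t1" using exp_ge_add_one_self[of t1] by linarith
    moreover have "exp (- 4 * a * t1) \<le> exp (- 2 * t1)" using a t1 mult_right_mono[of 2 "4 * a" t1] by simp
    ultimately have "t1 * exp (- 4 * a * t1) \<le> exp t1 * exp (- 2 * t1)" using t1 by (intro mult_mono) auto
    also have "\<dots> = exp (- t1)" by (simp flip: exp_add)
    finally show ?thesis by (simp add: R_def mult.commute)
  qed
  \<comment> \<open>Integrating over \<open>t2\<close> turns the factor \<open>1 + a\<close> into \<open>(1 + a) / (4a - 2) \<le> 1\<close>.\<close>
  have C_k: "C / k \<le> 24 * exp (- 2 * a\<^sup>2) * exp (- t1)"
  proof -
    have "C / k = 24 * exp (- 2 * a\<^sup>2) * exp (- t1) * ((1 + a) / k)" by (simp add: C_def)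
    also have "\<dots> \<le> 24 * exp (- 2 * a\<^sup>2) * exp (- t1) * 1"
      using a k by (intro mult_left_mono) (auto simp: k_def)
    finally show ?thesis by simp
  qed
  have "\<bar>integral {0..t1} (A4_kernel (- a) t1)\<bar> \<le> integral {0..t1} (\<lambda>t2. R + C * exp (- k * t2))"
    using A4_kernel_bound[OF a]
    by (intro abs_integral_le_integral integrable_continuous_interval continuous_intros)
       (auto simp: R_def C_def k_def mult.assoc)
  also have "\<dots> = R * t1 + integral {0..t1} (\<lambda>t2. C * exp (- k * t2))"
    using t1 by (subst integral_add) (auto intro!: integrable_continuous_interval continuous_intros)
  also have "\<dots> \<le> 26 * exp (- 2 * a\<^sup>2) * exp (- t1)"
    using tail R_t1 C_k by linarith
  finally show ?thesis .
qed

lemma A4_uminus_bound: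
  assumes "1 \<le> a"
  shows "\<bar>A4 (- a)\<bar> \<le> 26 * exp (- 2 * a\<^sup>2)"
proof -
  have "\<bar>integral {0..} (\<lambda>t1. integral {0..t1} (A4_kernel (- a) t1))\<bar> \<le> 26 * exp (- 2 * a\<^sup>2)"
    using A4_inner_integral_bound[OF assms] by (intro abs_integral_atLeast_0_le) simp
  moreover have "\<bar>A4 (- a)\<bar> \<le> \<bar>integral {0..} (\<lambda>t1. integral {0..t1} (A4_kernel (- a) t1))\<bar>"
    unfolding A4_eq_integral_A4_kernel
    by (intro abs_mult_le_abs) (use sqrt_2pi_ge_1 in \<open>simp del: real_sqrt_ge_1_iff\<close>)
  ultimately show ?thesis by linarith
qed

lemma A1_A2_A4_bigo: "(\<lambda>y. A1 y + A2 y + A4 y) \<in> O[at_bot](\<lambda>y. exp (- 2 * y\<^sup>2))"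
proof (rule bigoI[where c = 28])
  show "\<forall>\<^sub>F y in at_bot. norm (A1 y + A2 y + A4 y) \<le> 28 * norm (exp (- 2 * y\<^sup>2))"
    using eventually_le_at_bot[of "- 1"]
  proof eventually_elim
    case (elim y)
    then show ?case
      using A1_uminus_bound[of "- y"] A2_uminus_bound[of "- y"] A4_uminus_bound[of "- y"]
      by (auto simp: abs_le_iff)
  qed
qed

subsection \<open>The leading term\<close>

lemma A3_uminus:
  "A3 (- a) = erfc (sqrt 2 * a) / 4 *
     (a * exp (- 2 * a\<^sup>2) / sqrt (2 * pi) + (1/4 + a\<^sup>2) * (2 - erfc (sqrt 2 * a)))"
proof -
  have "erf (sqrt 2 * - a) = erfc (sqrt 2 * a) - 1"
    using erfc_uminus[of "sqrt 2 * a"] by (simp add: erf_def)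
  then show ?thesis unfolding A3_def by (simp only:) (simp add: algebra_simps)
qed

\<comment> \<open>Separates the Mills ratio of \<open>erfc (\<surd>2 a)\<close>, which tends to \<open>1\<close>, from elementary factors.\<close>
lemma A3_uminus_ratio:
  assumes "0 < a"
  shows "A3 (- a) / (\<bar>- a\<bar> * exp (- 2 * (- a)\<^sup>2) / (2 * sqrt (2 * pi)))
    = sqrt pi * (sqrt 2 * a) * exp ((sqrt 2 * a)\<^sup>2) * erfc (sqrt 2 * a)
      * (exp (- 2 * a\<^sup>2) / (2 * sqrt (2 * pi) * a) + (1/4 + a\<^sup>2) / (2 * a\<^sup>2) * (2 - erfc (sqrt 2 * a)))"
proof -
  have field: "X / 4 * (a * E / q + c * (2 - X)) / (a * E / (2 * q))
      = q * a * inverse E * X * (E / (2 * q * a) + c / (2 * a\<^sup>2) * (2 - X))"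
    if "0 < E" "0 < q" for X E q c :: real
    using assms that by (simp add: field_simps power2_eq_square)
  have denom: "\<bar>- a\<bar> * exp (- 2 * (- a)\<^sup>2) = a * exp (- 2 * a\<^sup>2)" using assms by simp
  have sqrt: "sqrt (2 * pi) * a = sqrt pi * (sqrt 2 * a)" by (simp add: real_sqrt_mult)
  have exp: "inverse (exp (- 2 * a\<^sup>2)) = exp ((sqrt 2 * a)\<^sup>2)"
    by (simp add: power_mult_distrib exp_minus)
  have "A3 (- a) / (\<bar>- a\<bar> * exp (- 2 * (- a)\<^sup>2) / (2 * sqrt (2 * pi)))
    = sqrt (2 * pi) * a * inverse (exp (- 2 * a\<^sup>2)) * erfc (sqrt 2 * a)
      * (exp (- 2 * a\<^sup>2) / (2 * sqrt (2 * pi) * a) + (1/4 + a\<^sup>2) / (2 * a\<^sup>2) * (2 - erfc (sqrt 2 * a)))"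
    unfolding A3_uminus denom by (rule field) simp_all
  then show ?thesis unfolding sqrt exp .
qed

lemma A3_asymp_equiv: "A3 \<sim>[at_bot] (\<lambda>y. \<bar>y\<bar> * exp (- 2 * y\<^sup>2) / (2 * sqrt (2 * pi)))"
proof (rule asymp_equivI')
  have sqrt2: "filterlim (\<lambda>a::real. sqrt 2 * a) at_top at_top" by real_asymp
  have mills: "((\<lambda>a. sqrt pi * (sqrt 2 * a) * exp ((sqrt 2 * a)\<^sup>2) * erfc (sqrt 2 * a)) \<longlongrightarrow> 1) at_top"
    using filterlim_compose[OF erfc_mills_ratio sqrt2] by simp
  have erfc: "((\<lambda>a. erfc (sqrt 2 * a)) \<longlongrightarrow> 0) at_top"
    using filterlim_compose[OF erfc_tendsto_0 sqrt2] by simp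
  have "((\<lambda>a. sqrt pi * (sqrt 2 * a) * exp ((sqrt 2 * a)\<^sup>2) * erfc (sqrt 2 * a)
      * (exp (- 2 * a\<^sup>2) / (2 * sqrt (2 * pi) * a) + (1/4 + a\<^sup>2) / (2 * a\<^sup>2) * (2 - erfc (sqrt 2 * a))))
      \<longlongrightarrow> 1 * (0 + 1/2 * (2 - 0))) at_top"
  proof (intro tendsto_mult tendsto_add tendsto_diff tendsto_const mills erfc)
    show "((\<lambda>a::real. exp (- 2 * a\<^sup>2) / (2 * sqrt (2 * pi) * a)) \<longlongrightarrow> 0) at_top"
      by real_asymp
    show "((\<lambda>a::real. (1/4 + a\<^sup>2) / (2 * a\<^sup>2)) \<longlongrightarrow> 1/2) at_top"
      by real_asymp
  qed
  then have "((\<lambda>a. sqrt pi * (sqrt 2 * a) * exp ((sqrt 2 * a)\<^sup>2) * erfc (sqrt 2 * a)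
      * (exp (- 2 * a\<^sup>2) / (2 * sqrt (2 * pi) * a) + (1/4 + a\<^sup>2) / (2 * a\<^sup>2) * (2 - erfc (sqrt 2 * a))))
      \<longlongrightarrow> 1) at_top"
    by (rule tendsto_eq_rhs) simp
  moreover have "\<forall>\<^sub>F a in at_top. sqrt pi * (sqrt 2 * a) * exp ((sqrt 2 * a)\<^sup>2) * erfc (sqrt 2 * a)
      * (exp (- 2 * a\<^sup>2) / (2 * sqrt (2 * pi) * a) + (1/4 + a\<^sup>2) / (2 * a\<^sup>2) * (2 - erfc (sqrt 2 * a)))
      = A3 (- a) / (\<bar>- a\<bar> * exp (- 2 * (- a)\<^sup>2) / (2 * sqrt (2 * pi)))"
    using eventually_gt_at_top[of 0] by eventually_elim (rule A3_uminus_ratio[symmetric])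
  ultimately have "((\<lambda>a. A3 (- a) / (\<bar>- a\<bar> * exp (- 2 * (- a)\<^sup>2) / (2 * sqrt (2 * pi)))) \<longlongrightarrow> 1) at_top"
    by (rule Lim_transform_eventually)
  then show "((\<lambda>y. A3 y / (\<bar>y\<bar> * exp (- 2 * y\<^sup>2) / (2 * sqrt (2 * pi)))) \<longlongrightarrow> 1) at_bot"
    unfolding filterlim_at_bot_mirror .
qed

theorem lemma9:
  shows "A \<sim>[at_bot] (\<lambda>y. \<bar>y\<bar> * exp (- 2 * y\<^sup>2) / (2 * sqrt (2 * pi)))"
proof -
  have "(\<lambda>y. exp (- 2 * y\<^sup>2)) \<in> o[at_bot](\<lambda>y. \<bar>y\<bar> * exp (- 2 * y\<^sup>2) / (2 * sqrt (2 * pi)))"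
    by real_asymp
  then have "(\<lambda>y. A1 y + A2 y + A4 y) \<in> o[at_bot](\<lambda>y. \<bar>y\<bar> * exp (- 2 * y\<^sup>2) / (2 * sqrt (2 * pi)))"
    by (rule landau_o.big_small_trans[OF A1_A2_A4_bigo])
  then have "(\<lambda>y. (A1 y + A2 y + A4 y) + A3 y) \<sim>[at_bot] (\<lambda>y. \<bar>y\<bar> * exp (- 2 * y\<^sup>2) / (2 * sqrt (2 * pi)))"
    using A3_asymp_equiv by (subst asymp_equiv_add_left)
  moreover have "A = (\<lambda>y. (A1 y + A2 y + A4 y) + A3 y)" by (simp add: fun_eq_iff A_def)
  ultimately show ?thesis by simp
qed

end
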